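(* Let $Q=\{q_1,\dots,q_N\}$ be a finite set of binary questions, and for each $i$ let $(x_i^+,x_i^-)$ be the contrast pair of input texts corresponding to $q_i$. Let $h:Q\to\{0,1\}$ be an arbitrary map. Define the probe $p$ by $p(x_i^+)=h(q_i)$ and $p(x_i^-)=1-h(q_i)$ for all $i$. Then $p$ attains the optimal (minimum possible) value of the CCS loss $$\mathcal{L}_{\mathrm{CCS}}(p)=\sum_{i=1}^N\Big(\big[p(x_i^+)-(1-p(x_i^-))\big]^2+\min\{p(x_i^+),p(x_i^-)\}^2\Big)$$ over all probes, and its averaged prediction satisfies $\tilde p(q_i)=\tfrac12\big[p(x_i^+)+(1-p(x_i^-))\big]=h(q_i)$ for every $i$.
   Context: A probe is any function $p$ assigning to each input text $x_i^+$, $x_i^-$ ($i=1,\dots,N$) a real number in $[0,1]$. The CCS (contrast-consistent search) loss of a probe is the sum displayed in the claim, consisting of a consistency term $[p(x_i^+)-(1-p(x_i^-))]^2$ and a confidence term $\min\{p(x_i^+),p(x_i^-)\}^2$ for each question. The averaged prediction of a probe on question $q_i$ is $\tilde p(q_i)=\tfrac12[p(x_i^+)+(1-p(x_i^-))]$. *)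

theory Defs
  imports Complex_Main
begin

text \<open>Input texts: Pos i stands for x_i^+, Neg i for x_i^- (question q_i, i < N).\<close>
datatype input_text = Pos nat | Neg nat

definition is_probe :: "nat \<Rightarrow> (input_text \<Rightarrow> real) \<Rightarrow> bool" where
  "is_probe N p \<longleftrightarrow> (\<forall>i<N. p (Pos i) \<in> {0..1} \<and> p (Neg i) \<in> {0..1})"

definition ccs_loss :: "nat \<Rightarrow> (input_text \<Rightarrow> real) \<Rightarrow> real" where
  "ccs_loss N p = (\<Sum>i<N. (p (Pos i) - (1 - p (Neg i)))^2 + (min (p (Pos i)) (p (Neg i)))^2)"

definition avg_pred :: "(input_text \<Rightarrow> real) \<Rightarrow> nat \<Rightarrow> real" where
  "avg_pred p i = (p (Pos i) + (1 - p (Neg i))) / 2"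

end

theory Submission
  imports Defs
begin

text \<open>The CCS loss is a sum of squares, hence nonnegative for every probe. A probe that
  answers every contrast pair consistently (p(x_i^-) = 1 - p(x_i^+)) and confidently
  (p(x_i^+) \<in> {0, 1}) makes each consistency and each confidence term vanish, so its loss is
  zero, the minimum; consistency also makes the averaged prediction equal to p(x_i^+).\<close>

lemma ccs_loss_nonneg: "0 \<le> ccs_loss N p"
  unfolding ccs_loss_def by (intro sum_nonneg) simp

lemma ccs_loss_eq_0_if_consistent_confident:
  assumes "\<forall>i<N. p (Neg i) = 1 - p (Pos i) \<and> p (Pos i) \<in> {0, 1}"
  shows "ccs_loss N p = 0"
  unfolding ccs_loss_def
proof (intro sum.neutral ballI)
  fix i assume "i \<in> {..<N}"
  with assms have "p (Neg i) = 1 - p (Pos i)" and "p (Pos i) \<in> {0, 1}" by auto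
  then show "(p (Pos i) - (1 - p (Neg i)))\<^sup>2 + (min (p (Pos i)) (p (Neg i)))\<^sup>2 = 0"
    by auto
qed

lemma avg_pred_if_consistent:
  assumes "p (Neg i) = 1 - p (Pos i)"
  shows "avg_pred p i = p (Pos i)"
  using assms unfolding avg_pred_def by simp

theorem theorem1:
  fixes N :: nat and h :: "nat \<Rightarrow> real" and p :: "input_text \<Rightarrow> real"
  assumes h01: "\<forall>i<N. h i \<in> {0, 1}"
    and p_def: "\<forall>i<N. p (Pos i) = h i \<and> p (Neg i) = 1 - h i"
  shows "is_probe N p
         \<and> (\<forall>p'. is_probe N p' \<longrightarrow> ccs_loss N p \<le> ccs_loss N p')
         \<and> (\<forall>i<N. avg_pred p i = h i)"
proof -
  have probe: "is_probe N p"
    unfolding is_probe_def using h01 p_def by auto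
  have "ccs_loss N p = 0"
    using h01 p_def by (intro ccs_loss_eq_0_if_consistent_confident) auto
  then have optimal: "\<forall>p'. is_probe N p' \<longrightarrow> ccs_loss N p \<le> ccs_loss N p'"
    using ccs_loss_nonneg by simp
  have "\<forall>i<N. avg_pred p i = h i"
    using p_def avg_pred_if_consistent by simp
  with probe optimal show ?thesis by blast
qed

end
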